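(* For each $n\ge1$ there is a bijection $\varphi'$ from the set of plane trees with $n$ edges to $\mathfrak S_n(321)$ such that, for every such tree $T$ and $\pi=\varphi'(T)$: (1) the number of young leaves of $T$ equals the number of indices $i\in\{1,\dots,n-1\}$ such that both $\pi_i$ and $\pi_{i+1}$ are deficiencies of $\pi$, plus $1$ if $\pi_n<n$; (2) the number of old leaves of $T$ equals the number of weak excedances $\pi_i$ of $\pi$ that are not followed by another weak excedance (i.e. $i=n$, or $\pi_{i+1}$ is not a weak excedance).
   Context: A plane tree is a rooted tree in which the children of each vertex are linearly ordered. A leaf is a vertex with no children; the one-vertex tree has no leaves. A leaf is old if it is the leftmost child of its parent, young otherwise. $\mathfrak S_n(321)$ is the set of permutations $\pi=\pi_1\cdots\pi_n$ of $\{1,\dots,n\}$ having no indices $a<b<c$ with $\pi_a>\pi_b>\pi_c$. An entry $\pi_i$ is a weak excedance if $\pi_i\ge i$ and a deficiency if $\pi_i<i$. *)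

theory Defs
  imports "HOL-Combinatorics.Permutations"
begin

datatype ptree = Node "ptree list"

fun edges :: "ptree \<Rightarrow> nat" where
  "edges (Node ts) = (\<Sum>t\<leftarrow>ts. Suc (edges t))"

text \<open>A leaf is a vertex with no children that has a parent (so the one-vertex
  tree has no leaves). It is old if it is the leftmost child of its parent,
  young otherwise.\<close>
fun old_leaves :: "ptree \<Rightarrow> nat" where
  "old_leaves (Node ts) =
     (case ts of [] \<Rightarrow> 0 | t # _ \<Rightarrow> (if t = Node [] then 1 else 0))
     + (\<Sum>t\<leftarrow>ts. old_leaves t)"

fun young_leaves :: "ptree \<Rightarrow> nat" where
  "young_leaves (Node ts) =
     length (filter (\<lambda>t. t = Node []) (drop 1 ts))
     + (\<Sum>t\<leftarrow>ts. young_leaves t)"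

definition plane_trees :: "nat \<Rightarrow> ptree set" where
  "plane_trees n = {T. edges T = n}"

text \<open>Permutations of {1..n} as functions nat => nat (identity outside).\<close>
definition avoids321 :: "nat \<Rightarrow> (nat \<Rightarrow> nat) \<Rightarrow> bool" where
  "avoids321 n \<pi> \<longleftrightarrow>
     \<not> (\<exists>a b c. 1 \<le> a \<and> a < b \<and> b < c \<and> c \<le> n \<and> \<pi> a > \<pi> b \<and> \<pi> b > \<pi> c)"

definition S321 :: "nat \<Rightarrow> (nat \<Rightarrow> nat) set" where
  "S321 n = {\<pi>. \<pi> permutes {1..n} \<and> avoids321 n \<pi>}"

definition weak_exc :: "(nat \<Rightarrow> nat) \<Rightarrow> nat \<Rightarrow> bool" where
  "weak_exc \<pi> i \<longleftrightarrow> \<pi> i \<ge> i"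

definition deficiency :: "(nat \<Rightarrow> nat) \<Rightarrow> nat \<Rightarrow> bool" where
  "deficiency \<pi> i \<longleftrightarrow> \<pi> i < i"

end

theory Submission
  imports Defs
begin

(* A 321-avoiding permutation is the union of two increasing subsequences, formed by its weak
   excedances and by its deficiencies. Hence it is determined by its deficiency pairs (i, \<pi> i)
   with \<pi> i < i, and every set of pairs (a, b) with 1 \<le> b < a \<le> n that is increasing in
   both coordinates (a deficiency chain) arises in this way: filling the remaining positions
   increasingly with the remaining values creates no further deficiency, because to the left
   of a free position there are at least as many free positions as free values.

   Plane trees with n edges correspond to deficiency chains by recursion on the first subtree:
   writing |t| for edges t, the chain of Node (t # ts) is the chain of t shifted one position to
   the right together with, if ts is nonempty, the pair (|t| + 2, |t| + 1) and the chain of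
   Node ts shifted diagonally by |t| + 1. Under the composite bijection, position i is a
   deficiency exactly when the i-th edge in preorder leads to a child that is not the leftmost
   one. An edge leads to a leaf iff the next edge in preorder is of this kind or there is no
   next edge, so young (old) leaves are counted by the deficiencies (weak excedances) that are
   followed by a deficiency or by the end. *)

section \<open>Increasing maps between finite sets\<close>

lemma finite_strict_mono_onto:
  fixes A :: "'a::linorder set" and B :: "'b::linorder set"
  assumes "finite A" "finite B" "card A = card B"
  obtains h where "strict_mono_on A h" "h ` A = B"
  using assms
proof (induction A arbitrary: B thesis rule: finite_linorder_max_induct)
  case empty
  then show ?case
    by (simp add: strict_mono_on_def)
next
  case (insert a A)
  define c where "c = Max B"
  have "B \<noteq> {}"
    using insert.prems insert.hyps by auto
  then have c: "c \<in> B" "\<And>b. b \<in> B \<Longrightarrow> b \<le> c"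
    using insert.prems(2) by (auto simp: c_def)
  have "a \<notin> A"
    using insert.hyps(2) by blast
  then have "card (B - {c}) = card A"
    using insert.prems insert.hyps(1) c(1) by simp
  then obtain h where h: "strict_mono_on A h" "h ` A = B - {c}"
    using insert.IH insert.prems(2) by (metis finite_Diff)
  have "strict_mono_on (insert a A) (h(a := c))"
  proof (rule strict_mono_onI)
    fix x y assume "x \<in> insert a A" "y \<in> insert a A" "x < y"
    moreover have "h x < c" if "x \<in> A"
      using that h c by (metis Diff_iff image_eqI insertI1 order_le_neq_trans)
    ultimately show "(h(a := c)) x < (h(a := c)) y"
      using insert.hyps(2) h(1) \<open>a \<notin> A\<close> by (auto dest: strict_mono_onD)
  qed
  moreover have "(h(a := c)) ` insert a A = B"
    using h(2) c(1) \<open>a \<notin> A\<close> by auto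
  ultimately show ?case
    using insert.prems(1) by blast
qed

lemma strict_mono_on_image_eq_unique:
  fixes f g :: "'a::linorder \<Rightarrow> 'b::linorder"
  assumes "finite A" "strict_mono_on A f" "strict_mono_on A g" "f ` A = g ` A" "x \<in> A"
  shows "f x = g x"
proof -
  let ?xs = "sorted_list_of_set A"
  have "sorted_wrt (<) (map h ?xs)" if "strict_mono_on A h" for h :: "'a \<Rightarrow> 'b"
    using that sorted_wrt_mono_rel[of ?xs "(<)" "\<lambda>x y. h x < h y"] assms(1)
    by (simp add: sorted_wrt_map strict_mono_onD)
  moreover have "set (map f ?xs) = set (map g ?xs)"
    using assms(1,4) by simp
  ultimately have "map f ?xs = map g ?xs"
    using assms(2,3) strict_sorted_equal by blast
  then show ?thesis
    using assms(1,5) by (simp add: map_eq_conv)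
qed

lemma strict_mono_on_ge:
  fixes h :: "nat \<Rightarrow> nat"
  assumes "finite A" "strict_mono_on A h" "a \<in> A"
    and "card {b \<in> h ` A. b < a} \<le> card {x \<in> A. x < a}"
  shows "a \<le> h a"
proof (rule ccontr)
  assume "\<not> a \<le> h a"
  then have "h ` {x \<in> A. x \<le> a} \<subseteq> {b \<in> h ` A. b < a}"
    using assms(2,3) strict_mono_on_leD[OF assms(2)] by fastforce
  then have "card (h ` {x \<in> A. x \<le> a}) \<le> card {b \<in> h ` A. b < a}"
    using assms(1) by (intro card_mono) auto
  moreover have "card (h ` {x \<in> A. x \<le> a}) = card {x \<in> A. x \<le> a}"
    using strict_mono_on_imp_inj_on[OF assms(2)] by (simp add: card_image inj_on_subset)
  moreover have "{x \<in> A. x \<le> a} = insert a {x \<in> A. x < a}"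
    using assms(3) by auto
  ultimately show False
    using assms(1,4) by simp
qed

lemma card_less_diff_image_le:
  fixes g :: "nat \<Rightarrow> nat"
  assumes "inj_on g D" "\<And>d. d \<in> D \<Longrightarrow> g d < d" "D \<subseteq> {1..n}" "g ` D \<subseteq> {1..n}"
  shows "card {v \<in> {1..n} - g ` D. v < e} \<le> card {x \<in> {1..n} - D. x < e}"
proof -
  have below_diff: "card {v \<in> {1..n} - X. v < e} = card {v \<in> {1..n}. v < e} - card {x \<in> X. x < e}"
    if "X \<subseteq> {1..n}" for X
  proof -
    have "{v \<in> {1..n} - X. v < e} = {v \<in> {1..n}. v < e} - {x \<in> X. x < e}"
      by blast
    then show ?thesis
      using that by (simp add: card_Diff_subset finite_subset subset_iff)
  qed
  have "g ` {d \<in> D. d < e} \<subseteq> {w \<in> g ` D. w < e}"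
    using assms(2) by fastforce
  then have "card {d \<in> D. d < e} \<le> card {w \<in> g ` D. w < e}"
    using assms(1,4) card_mono[of "{w \<in> g ` D. w < e}"] card_image[of g "{d \<in> D. d < e}"]
    by (metis (no_types, lifting) finite_atLeastAtMost finite_subset inj_on_subset mem_Collect_eq subsetI)
  moreover have "card {x \<in> X. x < e} \<le> card {v \<in> {1..n}. v < e}" if "X \<subseteq> {1..n}" for X
    using that by (intro card_mono) auto
  ultimately show ?thesis
    using below_diff[OF assms(3)] below_diff[OF assms(4)] by simp
qed

lemma exists_increasing_map_on_complement:
  fixes g :: "nat \<Rightarrow> nat"
  assumes g: "strict_mono_on D g" "\<And>d. d \<in> D \<Longrightarrow> g d < d"
    and D: "D \<subseteq> {1..n}" "g ` D \<subseteq> {1..n}"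
  obtains h where "strict_mono_on ({1..n} - D) h" "h ` ({1..n} - D) = {1..n} - g ` D"
    and "\<And>e. e \<in> {1..n} - D \<Longrightarrow> e \<le> h e"
proof -
  have "finite D"
    using D finite_subset by blast
  moreover have "card (g ` D) = card D"
    using card_image strict_mono_on_imp_inj_on[OF g(1)] by blast
  ultimately have "card ({1..n} - D) = card ({1..n} - g ` D)"
    using D by (simp add: card_Diff_subset finite_subset)
  then obtain h where h: "strict_mono_on ({1..n} - D) h" "h ` ({1..n} - D) = {1..n} - g ` D"
    using finite_strict_mono_onto[of "{1..n} - D" "{1..n} - g ` D"] by auto
  moreover have "e \<le> h e" if "e \<in> {1..n} - D" for e
    using strict_mono_on_ge[OF _ h(1) that] h(2)
      card_less_diff_image_le[OF strict_mono_on_imp_inj_on[OF g(1)] g(2) D, of e]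
    by simp
  ultimately show ?thesis
    using that by blast
qed

section \<open>Counting in boolean words\<close>

lemma card_less_Suc_split:
  "card {i. i < Suc m \<and> P i} = (if P 0 then 1 else 0) + card {i. i < m \<and> P (Suc i)}"
proof -
  have "{i. i < Suc m \<and> P i} = (if P 0 then {0} else {}) \<union> Suc ` {i. i < m \<and> P (Suc i)}"
    by (auto simp: less_Suc_eq_0_disj)
  moreover have "card (Suc ` {i. i < m \<and> P (Suc i)}) = card {i. i < m \<and> P (Suc i)}"
    by (simp add: card_image)
  ultimately show ?thesis
    by (simp add: card_Un_disjoint)
qed

lemma Collect_atLeastAtMost_1_eq_image_Suc:
  "{i \<in> {1..n}. Q i} = Suc ` {j. j < n \<and> Q (Suc j)}"
proof (rule set_eqI)
  fix i
  show "i \<in> {i \<in> {1..n}. Q i} \<longleftrightarrow> i \<in> Suc ` {j. j < n \<and> Q (Suc j)}"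
    by (cases i) auto
qed

lemma card_split_last:
  fixes n :: nat
  assumes "1 \<le> n"
  shows "card {i \<in> {1..n}. P i \<and> (i = n \<or> Q i)} =
    card {i \<in> {1..n - 1}. P i \<and> Q i} + (if P n then 1 else 0)"
proof -
  have "{i \<in> {1..n}. P i \<and> (i = n \<or> Q i)} =
      {i \<in> {1..n - 1}. P i \<and> Q i} \<union> (if P n then {n} else {})"
  proof (rule set_eqI)
    fix i
    show "i \<in> {i \<in> {1..n}. P i \<and> (i = n \<or> Q i)} \<longleftrightarrow>
        i \<in> {i \<in> {1..n - 1}. P i \<and> Q i} \<union> (if P n then {n} else {})"
      using assms by (cases "i = n") auto
  qed
  moreover have "n \<notin> {i \<in> {1..n - 1}. P i \<and> Q i}"
    using assms by auto
  ultimately show ?thesis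
    by simp
qed

fun count_before_true :: "bool \<Rightarrow> bool list \<Rightarrow> nat" where
  "count_before_true b [] = 0"
| "count_before_true b (x # xs) =
     (if x = b \<and> (xs = [] \<or> hd xs) then 1 else 0) + count_before_true b xs"

lemma count_before_true_append:
  "ys \<noteq> [] \<Longrightarrow> hd ys \<Longrightarrow>
   count_before_true b (xs @ ys) = count_before_true b xs + count_before_true b ys"
  by (induction xs) (auto simp: hd_append)

lemma count_before_true_eq_card:
  "count_before_true b xs =
     card {i. i < length xs \<and> xs ! i = b \<and> (Suc i = length xs \<or> xs ! Suc i)}"
proof (induction xs)
  case (Cons x xs)
  have "(xs = [] \<or> hd xs) \<longleftrightarrow> (Suc 0 = length (x # xs) \<or> (x # xs) ! Suc 0)"
    by (cases xs) auto
  with Cons show ?case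
    by (simp only: length_Cons card_less_Suc_split nth_Cons_0 nth_Cons_Suc nat.inject
        count_before_true.simps)
qed simp

lemma count_before_true_eq_card_shifted:
  assumes "length w = n" "\<And>i. i \<in> {1..n} \<Longrightarrow> P i \<longleftrightarrow> w ! (i - 1)"
  shows "count_before_true b w = card {i \<in> {1..n}. P i = b \<and> (i = n \<or> P (i + 1))}"
proof -
  have "(P (Suc j) = b \<and> (Suc j = n \<or> P (Suc (Suc j)))) \<longleftrightarrow>
      (w ! j = b \<and> (Suc j = n \<or> w ! Suc j))" if "j < n" for j
    using that assms(2)[of "Suc j"] assms(2)[of "Suc (Suc j)"] by (cases "Suc j = n") auto
  then have "{j. j < n \<and> P (Suc j) = b \<and> (Suc j = n \<or> P (Suc (Suc j)))} =
      {j. j < n \<and> w ! j = b \<and> (Suc j = n \<or> w ! Suc j)}"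
    by blast
  then show ?thesis
    unfolding Collect_atLeastAtMost_1_eq_image_Suc[of n]
    using assms(1) by (simp add: count_before_true_eq_card card_image)
qed

fun mark_head :: "bool list \<Rightarrow> bool list" where
  "mark_head [] = []"
| "mark_head (x # xs) = True # xs"

lemma length_mark_head [simp]: "length (mark_head xs) = length xs"
  by (cases xs) auto

definition true_positions :: "bool list \<Rightarrow> nat set" where
  "true_positions w = {i. i < length w \<and> w ! i}"

lemma true_positions_Nil [simp]: "true_positions [] = {}"
  by (simp add: true_positions_def)

lemma true_positions_Cons:
  "true_positions (x # w) = (if x then {0} else {}) \<union> Suc ` true_positions w"
proof (rule set_eqI)
  fix i
  show "i \<in> true_positions (x # w) \<longleftrightarrow> i \<in> (if x then {0} else {}) \<union> Suc ` true_positions w"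
    by (cases i) (auto simp: true_positions_def)
qed

lemma true_positions_append:
  "true_positions (xs @ ys) = true_positions xs \<union> (\<lambda>i. length xs + i) ` true_positions ys"
  by (induction xs) (auto simp: true_positions_Cons image_Un image_image)

lemma true_positions_mark_head:
  "true_positions (mark_head w) = (if w = [] then {} else insert 0 (true_positions w))"
  by (cases w) (auto simp: true_positions_Cons)

section \<open>The edge word of a plane tree\<close>

(* Letter i tells whether the i-th edge in preorder leads to a child other than the leftmost. *)
fun tree_word :: "ptree \<Rightarrow> bool list" where
  "tree_word (Node []) = []"
| "tree_word (Node (t # ts)) = False # tree_word t @ mark_head (tree_word (Node ts))"

lemma length_tree_word: "length (tree_word T) = edges T"
  by (induction T rule: tree_word.induct) auto

lemma edges_eq_0_iff: "edges T = 0 \<longleftrightarrow> T = Node []"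
  by (cases T rule: tree_word.cases) auto

lemma tree_word_eq_Nil_iff: "tree_word T = [] \<longleftrightarrow> T = Node []"
  by (cases T rule: tree_word.cases) auto

lemma tree_word_Cons_head: "tree_word T = x # xs \<Longrightarrow> \<not> x"
  by (cases T rule: tree_word.cases) auto

definition second_child_leaf :: "ptree list \<Rightarrow> bool" where
  "second_child_leaf ts \<longleftrightarrow> (case ts of [] \<Rightarrow> False | s # _ \<Rightarrow> s = Node [])"

lemma young_leaves_Cons:
  "young_leaves (Node (t # ts)) =
     young_leaves t + young_leaves (Node ts) + (if second_child_leaf ts then 1 else 0)"
  by (cases ts) (auto simp: second_child_leaf_def)

lemma old_leaves_Cons:
  "old_leaves (Node (t # ts)) + (if second_child_leaf ts then 1 else 0) =
     (if t = Node [] then 1 else 0) + old_leaves t + old_leaves (Node ts)"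
  by (cases ts) (auto simp: second_child_leaf_def)

lemma count_before_true_tree_word_Cons:
  "count_before_true b (tree_word (Node (t # ts))) + (if \<not> b \<and> second_child_leaf ts then 1 else 0) =
     (if \<not> b \<and> t = Node [] then 1 else 0) + count_before_true b (tree_word t)
     + count_before_true b (tree_word (Node ts)) + (if b \<and> second_child_leaf ts then 1 else 0)"
proof -
  let ?c = "count_before_true b"
  have "?c (tree_word (Node (t # ts))) =
      (if \<not> b \<and> t = Node [] then 1 else 0) + ?c (tree_word t @ mark_head (tree_word (Node ts)))"
    by (cases "tree_word t"; cases "tree_word (Node ts)")
      (auto simp: tree_word_eq_Nil_iff dest: tree_word_Cons_head)
  moreover have "?c (tree_word t @ mark_head (tree_word (Node ts))) =
      ?c (tree_word t) + ?c (mark_head (tree_word (Node ts)))"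
    by (cases "tree_word (Node ts)") (auto simp: count_before_true_append)
  moreover have "?c (mark_head (tree_word (Node ts))) + (if \<not> b \<and> second_child_leaf ts then 1 else 0) =
      ?c (tree_word (Node ts)) + (if b \<and> second_child_leaf ts then 1 else 0)"
  proof (cases ts)
    case (Cons s ts')
    then show ?thesis
      by (cases "tree_word s"; cases "tree_word (Node ts')")
        (auto simp: second_child_leaf_def tree_word_eq_Nil_iff dest: tree_word_Cons_head)
  qed (simp add: second_child_leaf_def)
  ultimately show ?thesis
    by simp
qed

lemma leaves_eq_count_before_true:
  "young_leaves T = count_before_true True (tree_word T) \<and>
   old_leaves T = count_before_true False (tree_word T)"
proof (induction T rule: tree_word.induct)
  case (2 t ts)
  then show ?case
    using young_leaves_Cons[of t ts] old_leaves_Cons[of t ts]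
      count_before_true_tree_word_Cons[of True t ts] count_before_true_tree_word_Cons[of False t ts]
    by simp
qed simp

section \<open>Deficiency chains\<close>

definition translate :: "nat \<Rightarrow> nat \<Rightarrow> nat \<times> nat \<Rightarrow> nat \<times> nat" where
  "translate x y = (\<lambda>(a, b). (a + x, b + y))"

lemma translate_apply [simp]: "translate x y (a, b) = (a + x, b + y)"
  by (simp add: translate_def)

lemma inj_translate: "inj (translate x y)"
  by (auto simp: inj_def translate_def)

lemma mem_image_translate:
  "(c, d) \<in> translate x y ` A \<longleftrightarrow> x \<le> c \<and> y \<le> d \<and> (c - x, d - y) \<in> A"
  by (force simp: translate_def)

lemma range_translate: "range (translate x y) = {(a, b). x \<le> a \<and> y \<le> b}"
  using mem_image_translate[of _ _ x y UNIV] by auto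

lemma fst_image_translate: "fst ` translate x y ` A = (\<lambda>a. a + x) ` fst ` A"
  by (force simp: translate_def)

definition deficiency_chain :: "nat \<Rightarrow> (nat \<times> nat) set \<Rightarrow> bool" where
  "deficiency_chain n S \<longleftrightarrow>
     (\<forall>(a, b) \<in> S. 1 \<le> b \<and> b < a \<and> a \<le> n) \<and>
     (\<forall>(a, b) \<in> S. \<forall>(c, d) \<in> S. a < c \<longleftrightarrow> b < d)"

lemma deficiency_chainI:
  assumes "\<And>a b. (a, b) \<in> S \<Longrightarrow> 1 \<le> b \<and> b < a \<and> a \<le> n"
    and "\<And>a b c d. (a, b) \<in> S \<Longrightarrow> (c, d) \<in> S \<Longrightarrow> a < c \<longleftrightarrow> b < d"
  shows "deficiency_chain n S"
  using assms by (auto simp: deficiency_chain_def)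

lemma deficiency_chain_bounds:
  "deficiency_chain n S \<Longrightarrow> (a, b) \<in> S \<Longrightarrow> 1 \<le> b \<and> b < a \<and> a \<le> n"
  by (auto simp: deficiency_chain_def)

lemma deficiency_chain_less_iff:
  "deficiency_chain n S \<Longrightarrow> (a, b) \<in> S \<Longrightarrow> (c, d) \<in> S \<Longrightarrow> a < c \<longleftrightarrow> b < d"
  unfolding deficiency_chain_def by fast

lemma deficiency_chain_fst_eq:
  "deficiency_chain n S \<Longrightarrow> (a, b) \<in> S \<Longrightarrow> (a, d) \<in> S \<Longrightarrow> b = d"
  using deficiency_chain_less_iff[of n S a b a d] deficiency_chain_less_iff[of n S a d a b]
  by simp

lemma deficiency_chain_mono: "deficiency_chain m S \<Longrightarrow> m \<le> n \<Longrightarrow> deficiency_chain n S"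
  by (auto simp: deficiency_chain_def)

lemma deficiency_chain_Un:
  assumes "deficiency_chain n A" "deficiency_chain n B"
    and "\<And>a b c d. (a, b) \<in> A \<Longrightarrow> (c, d) \<in> B \<Longrightarrow> a < c \<and> b < d"
  shows "deficiency_chain n (A \<union> B)"
proof (rule deficiency_chainI)
  show "1 \<le> b \<and> b < a \<and> a \<le> n" if "(a, b) \<in> A \<union> B" for a b
    using that assms(1,2) deficiency_chain_bounds by blast
  show "a < c \<longleftrightarrow> b < d" if "(a, b) \<in> A \<union> B" "(c, d) \<in> A \<union> B" for a b c d
    using that assms deficiency_chain_less_iff[OF assms(1)] deficiency_chain_less_iff[OF assms(2)]
    by (metis Un_iff less_asym)
qed

lemma deficiency_chain_image_translate:
  "deficiency_chain m S \<Longrightarrow> y \<le> x \<Longrightarrow> deficiency_chain (m + x) (translate x y ` S)"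
  by (rule deficiency_chainI)
    (auto simp: mem_image_translate dest: deficiency_chain_bounds deficiency_chain_less_iff)

lemma deficiency_chain_vimage_translate:
  assumes "deficiency_chain n S"
    and "\<And>a b. (a + x, b + y) \<in> S \<Longrightarrow> 1 \<le> b \<and> b < a \<and> a \<le> m"
  shows "deficiency_chain m (translate x y -` S)"
proof (rule deficiency_chainI)
  show "a < c \<longleftrightarrow> b < d"
    if "(a, b) \<in> translate x y -` S" "(c, d) \<in> translate x y -` S" for a b c d
    using deficiency_chain_less_iff[OF assms(1)] that by fastforce
qed (use assms(2) in auto)

lemma deficiency_chain_subset:
  "deficiency_chain n S \<Longrightarrow> fst ` S \<subseteq> {1..n} \<and> snd ` S \<subseteq> {1..n}"
  using deficiency_chain_bounds by fastforce

definition chain_value :: "(nat \<times> nat) set \<Rightarrow> nat \<Rightarrow> nat" where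
  "chain_value S a = (THE b. (a, b) \<in> S)"

lemma chain_value_eq: "deficiency_chain n S \<Longrightarrow> (a, b) \<in> S \<Longrightarrow> chain_value S a = b"
  unfolding chain_value_def by (blast intro: the_equality dest: deficiency_chain_fst_eq)

lemma deficiency_chain_graph:
  "deficiency_chain n S \<Longrightarrow> S = (\<lambda>a. (a, chain_value S a)) ` fst ` S"
  using chain_value_eq by force

lemma chain_value_image: "deficiency_chain n S \<Longrightarrow> chain_value S ` fst ` S = snd ` S"
  using chain_value_eq by force

lemma chain_value_less: "deficiency_chain n S \<Longrightarrow> a \<in> fst ` S \<Longrightarrow> chain_value S a < a"
  using chain_value_eq deficiency_chain_bounds by fastforce

lemma strict_mono_on_chain_value: "deficiency_chain n S \<Longrightarrow> strict_mono_on (fst ` S) (chain_value S)"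
  using chain_value_eq deficiency_chain_less_iff by (fastforce intro!: strict_mono_onI)

section \<open>Plane trees and deficiency chains\<close>

fun tree_chain :: "ptree \<Rightarrow> (nat \<times> nat) set" where
  "tree_chain (Node []) = {}"
| "tree_chain (Node (t # ts)) = translate 1 0 ` tree_chain t \<union>
     (if ts = [] then {}
      else insert (Suc (Suc (edges t)), Suc (edges t))
        (translate (Suc (edges t)) (Suc (edges t)) ` tree_chain (Node ts)))"

lemma deficiency_chain_tree_chain: "deficiency_chain (edges T) (tree_chain T)"
proof (induction T rule: tree_chain.induct)
  case 1
  then show ?case
    by (simp add: deficiency_chain_def)
next
  case (2 t ts)
  let ?k = "Suc (edges t)" and ?m = "edges (Node ts)"
  have lower: "deficiency_chain (?k + ?m) (translate 1 0 ` tree_chain t)"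
    using deficiency_chain_image_translate[OF "2.IH"(1), of 0 1] by (auto intro: deficiency_chain_mono)
  have upper: "deficiency_chain (?k + ?m)
      (insert (Suc ?k, ?k) (translate ?k ?k ` tree_chain (Node ts)))" if "ts \<noteq> []"
  proof -
    have "1 \<le> ?m"
      using that by (cases ts) auto
    then have "deficiency_chain (?k + ?m) {(Suc ?k, ?k)}"
      by (simp add: deficiency_chain_def)
    moreover have "deficiency_chain (?k + ?m) (translate ?k ?k ` tree_chain (Node ts))"
      using deficiency_chain_image_translate[OF "2.IH"(2)[OF that], of ?k ?k]
      by (simp add: add.commute)
    ultimately show ?thesis
      using deficiency_chain_Un[of "?k + ?m" "{(Suc ?k, ?k)}"] "2.IH"(2)[OF that]
      by (force simp: mem_image_translate dest: deficiency_chain_bounds)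
  qed
  have "deficiency_chain (?k + ?m) (tree_chain (Node (t # ts)))"
  proof (cases "ts = []")
    case False
    have "a < c \<and> b < d"
      if "(a, b) \<in> translate 1 0 ` tree_chain t"
        and "(c, d) \<in> insert (Suc ?k, ?k) (translate ?k ?k ` tree_chain (Node ts))" for a b c d
      using that "2.IH"(1) "2.IH"(2)[OF False]
      by (fastforce simp: mem_image_translate dest: deficiency_chain_bounds)
    then show ?thesis
      using deficiency_chain_Un[OF lower upper[OF False]] False by simp
  qed (use lower in simp)
  then show ?case
    by simp
qed

lemma tree_chain_Cons_lower:
  "{p \<in> tree_chain (Node (t # ts)). fst p \<le> Suc (edges t)} = translate 1 0 ` tree_chain t"
  using deficiency_chain_tree_chain[of t] deficiency_chain_tree_chain[of "Node ts"]
  by (auto simp: mem_image_translate dest: deficiency_chain_bounds)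

lemma tree_chain_Cons_upper:
  "{p \<in> tree_chain (Node (t # ts)). Suc (Suc (edges t)) < fst p} =
     (if ts = [] then {} else translate (Suc (edges t)) (Suc (edges t)) ` tree_chain (Node ts))"
  using deficiency_chain_tree_chain[of t] deficiency_chain_tree_chain[of "Node ts"]
  by (auto simp: mem_image_translate dest: deficiency_chain_bounds)

lemma tree_chain_Cons_unit_step:
  "(Suc b, b) \<in> tree_chain (Node (t # ts)) \<Longrightarrow> ts \<noteq> [] \<and> Suc (edges t) \<le> b"
  using deficiency_chain_tree_chain[of t]
  by (auto simp: mem_image_translate split: if_splits dest: deficiency_chain_bounds)

lemma tree_chain_Cons_step:
  "ts \<noteq> [] \<Longrightarrow> (Suc (Suc (edges t)), Suc (edges t)) \<in> tree_chain (Node (t # ts))"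
  by simp

lemma tree_chain_Cons_eqD:
  assumes chain_eq: "tree_chain (Node (t # ts)) = tree_chain (Node (t' # ts'))"
    and edges_eq: "edges (Node (t # ts)) = edges (Node (t' # ts'))"
  shows "ts = [] \<longleftrightarrow> ts' = []" and "edges t = edges t'"
proof -
  note steps = tree_chain_Cons_step[of ts t] tree_chain_Cons_step[of ts' t']
    tree_chain_Cons_unit_step[of _ t ts] tree_chain_Cons_unit_step[of _ t' ts']
  show Nil_iff: "ts = [] \<longleftrightarrow> ts' = []"
    using steps chain_eq by metis
  show "edges t = edges t'"
  proof (cases "ts = []")
    case True
    then show ?thesis
      using edges_eq Nil_iff by simp
  next
    case False
    then show ?thesis
      using steps chain_eq Nil_iff by (metis le_antisym Suc_le_mono)
  qed
qed

lemma tree_chain_inj: "tree_chain T = tree_chain T' \<Longrightarrow> edges T = edges T' \<Longrightarrow> T = T'"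
proof (induction T arbitrary: T' rule: tree_chain.induct)
  case 1
  then show ?case
    using edges_eq_0_iff by simp
next
  case (2 t ts)
  obtain t' ts' where T': "T' = Node (t' # ts')"
    using "2.prems"(2) edges_eq_0_iff by (cases T' rule: tree_chain.cases) auto
  have chain_eq: "tree_chain (Node (t # ts)) = tree_chain (Node (t' # ts'))"
    using "2.prems"(1) T' by simp
  note Nil_iff = tree_chain_Cons_eqD(1)[OF chain_eq "2.prems"(2)[unfolded T']]
    and edges_eq = tree_chain_Cons_eqD(2)[OF chain_eq "2.prems"(2)[unfolded T']]
  have "translate 1 0 ` tree_chain t = translate 1 0 ` tree_chain t'"
    using tree_chain_Cons_lower[of t ts] tree_chain_Cons_lower[of t' ts'] chain_eq edges_eq by metis
  then have "tree_chain t = tree_chain t'"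
    by (simp add: inj_image_eq_iff[OF inj_translate])
  moreover have "tree_chain (Node ts) = tree_chain (Node ts')"
  proof (cases "ts = []")
    case False
    then have "translate (Suc (edges t)) (Suc (edges t)) ` tree_chain (Node ts) =
        translate (Suc (edges t)) (Suc (edges t)) ` tree_chain (Node ts')"
      using tree_chain_Cons_upper[of t ts] tree_chain_Cons_upper[of t' ts'] chain_eq edges_eq Nil_iff
      by metis
    then show ?thesis
      by (simp add: inj_image_eq_iff[OF inj_translate])
  qed (use Nil_iff in simp)
  moreover have "edges (Node ts) = edges (Node ts')"
    using "2.prems"(2) T' edges_eq by simp
  ultimately have "t = t'" and "Node ts = Node ts'"
    using "2.IH" edges_eq Nil_iff by (auto simp del: edges.simps)
  then show ?case
    using T' by simp
qed

lemma deficiency_chain_without_unit_step: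
  assumes S: "deficiency_chain n S" and no_step: "\<And>b. (Suc b, b) \<notin> S"
  shows "deficiency_chain (n - 1) (translate 1 0 -` S)"
    and "translate 1 0 ` (translate 1 0 -` S) = S"
proof -
  have "1 \<le> b \<and> b < a \<and> a \<le> n - 1" if "(a + 1, b + 0) \<in> S" for a b
    using that deficiency_chain_bounds[OF S that] no_step[of a] by (cases "a = b") auto
  then show "deficiency_chain (n - 1) (translate 1 0 -` S)"
    by (rule deficiency_chain_vimage_translate[OF S])
  show "translate 1 0 ` (translate 1 0 -` S) = S"
    by (auto simp: range_translate dest: deficiency_chain_bounds[OF S])
qed

lemma deficiency_chain_split_at_unit_step:
  assumes S: "deficiency_chain n S" and step: "(Suc k, k) \<in> S"
    and first_step: "\<And>b. (Suc b, b) \<in> S \<Longrightarrow> k \<le> b"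
  defines "A \<equiv> {p \<in> S. fst p \<le> k}" and "B \<equiv> {p \<in> S. Suc k < fst p}"
  shows "deficiency_chain (k - 1) (translate 1 0 -` A)"
    and "deficiency_chain (n - k) (translate k k -` B)"
    and "S = translate 1 0 ` (translate 1 0 -` A) \<union>
      insert (Suc k, k) (translate k k ` (translate k k -` B))"
proof -
  note bounds = deficiency_chain_bounds[OF S]
  have "deficiency_chain n A" "deficiency_chain n B"
    using S by (auto simp: deficiency_chain_def A_def B_def)
  show "deficiency_chain (k - 1) (translate 1 0 -` A)"
  proof (rule deficiency_chain_vimage_translate[OF \<open>deficiency_chain n A\<close>])
    show "1 \<le> b \<and> b < a \<and> a \<le> k - 1" if "(a + 1, b + 0) \<in> A" for a b
      using that bounds[of "a + 1" b] first_step[of a] by (cases "b = a") (auto simp: A_def)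
  qed
  show "deficiency_chain (n - k) (translate k k -` B)"
  proof (rule deficiency_chain_vimage_translate[OF \<open>deficiency_chain n B\<close>])
    show "1 \<le> b \<and> b < a \<and> a \<le> n - k" if "(a + k, b + k) \<in> B" for a b
      using that bounds deficiency_chain_less_iff[OF S step, of "a + k" "b + k"]
      by (fastforce simp: B_def)
  qed
  have "translate 1 0 ` (translate 1 0 -` A) = A"
    by (simp add: range_translate) (auto simp: A_def dest: bounds)
  moreover have "translate k k ` (translate k k -` B) = B"
    using deficiency_chain_less_iff[OF S step] by (simp add: range_translate) (force simp: B_def)
  moreover have "S = A \<union> insert (Suc k, k) B"
    using step deficiency_chain_fst_eq[OF S _ step] by (auto simp: A_def B_def not_less le_Suc_eq)
  ultimately show "S = translate 1 0 ` (translate 1 0 -` A) \<union>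
      insert (Suc k, k) (translate k k ` (translate k k -` B))"
    by simp
qed

lemma tree_chain_surj: "deficiency_chain n S \<Longrightarrow> \<exists>T. edges T = n \<and> tree_chain T = S"
proof (induction n arbitrary: S rule: less_induct)
  case (less n S)
  show ?case
  proof (cases "\<exists>b. (Suc b, b) \<in> S")
    case False
    show ?thesis
    proof (cases "n = 0")
      case True
      then show ?thesis
        using deficiency_chain_bounds[OF less.prems] by (intro exI[of _ "Node []"]) fastforce
    next
      case False
      then have "n - 1 < n"
        by simp
      then obtain t where "edges t = n - 1" "tree_chain t = translate 1 0 -` S"
        using less.IH deficiency_chain_without_unit_step(1)[OF less.prems] \<open>\<nexists>b. _\<close> by blast
      then have "edges (Node [t]) = n \<and> tree_chain (Node [t]) = S"
        using False deficiency_chain_without_unit_step(2)[OF less.prems] \<open>\<nexists>b. _\<close> by auto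
      then show ?thesis ..
    qed
  next
    case True
    define k where "k = (LEAST b. (Suc b, b) \<in> S)"
    have step: "(Suc k, k) \<in> S"
      using True unfolding k_def by (rule LeastI_ex)
    have first_step: "k \<le> b" if "(Suc b, b) \<in> S" for b
      using that unfolding k_def by (rule Least_le)
    note split = deficiency_chain_split_at_unit_step[OF less.prems step first_step]
    have k: "1 \<le> k" "Suc k \<le> n"
      using deficiency_chain_bounds[OF less.prems step] by auto
    have "k - 1 < n" "n - k < n"
      using k by auto
    then obtain t u where t: "edges t = k - 1" "tree_chain t = translate 1 0 -` {p \<in> S. fst p \<le> k}"
      and u: "edges u = n - k" "tree_chain u = translate k k -` {p \<in> S. Suc k < fst p}"
      using less.IH split(1,2) by meson
    obtain ts where ts: "u = Node ts" "ts \<noteq> []"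
      using u(1) k edges_eq_0_iff by (metis ptree.exhaust diff_is_0_eq not_less_eq_eq)
    have "edges (Node (t # ts)) = n \<and> tree_chain (Node (t # ts)) = S"
      using t u ts k split(3) by simp
    then show ?thesis ..
  qed
qed

lemma tree_chain_bij: "bij_betw tree_chain (plane_trees n) {S. deficiency_chain n S}"
  unfolding bij_betw_def inj_on_def plane_trees_def
  using tree_chain_inj deficiency_chain_tree_chain tree_chain_surj by fastforce

lemma fst_tree_chain: "fst ` tree_chain T = Suc ` true_positions (tree_word T)"
proof (induction T rule: tree_chain.induct)
  case 1
  then show ?case
    by simp
next
  case (2 t ts)
  let ?k = "Suc (edges t)" and ?w = "tree_word (Node ts)"
  have "fst ` tree_chain (Node (t # ts)) = Suc ` fst ` tree_chain t \<union>
      (if ts = [] then {} else insert (Suc ?k) ((\<lambda>a. a + ?k) ` fst ` tree_chain (Node ts)))"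
    by (simp add: image_Un fst_image_translate)
  also have "\<dots> = Suc ` Suc ` true_positions (tree_word t) \<union>
      (if ts = [] then {} else insert (Suc ?k) ((\<lambda>a. a + ?k) ` Suc ` true_positions ?w))"
    using 2 by simp
  also have "\<dots> = Suc ` true_positions (tree_word (Node (t # ts)))"
    using tree_word_eq_Nil_iff[of "Node ts"]
    by (simp add: true_positions_Cons true_positions_append true_positions_mark_head
        image_Un image_image length_tree_word ac_simps)
  finally show ?case .
qed

section \<open>321-avoiding permutations and deficiency chains\<close>

lemma card_permutes_filter:
  assumes "\<pi> permutes A"
  shows "card {x \<in> A. P (\<pi> x)} = card {y \<in> A. P y}"
proof -
  have "\<pi> ` {x \<in> A. P (\<pi> x)} = {y \<in> A. P y}"
    using permutes_image[OF assms] by force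
  moreover have "inj_on \<pi> {x \<in> A. P (\<pi> x)}"
    using permutes_inj_on[OF assms] by (rule inj_on_subset) blast
  ultimately show ?thesis
    using card_image by metis
qed

lemma S321_permutes: "\<pi> \<in> S321 n \<Longrightarrow> \<pi> permutes {1..n}"
  and S321_avoids321: "\<pi> \<in> S321 n \<Longrightarrow> avoids321 n \<pi>"
  by (simp_all add: S321_def)

lemma S321_in_range: "\<pi> \<in> S321 n \<Longrightarrow> i \<in> {1..n} \<Longrightarrow> \<pi> i \<in> {1..n}"
  by (rule permutes_in_image[OF S321_permutes, THEN iffD2])

lemma S321_weak_exc_less:
  assumes "\<pi> \<in> S321 n" "1 \<le> i" "i < j" "j \<le> n" "weak_exc \<pi> i" "weak_exc \<pi> j"
  shows "\<pi> i < \<pi> j"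
proof (rule ccontr)
  assume "\<not> \<pi> i < \<pi> j"
  moreover have "\<pi> i \<noteq> \<pi> j"
    using permutes_inj[OF S321_permutes[OF assms(1)]] assms(3) by (metis inj_eq less_irrefl)
  ultimately have ji: "\<pi> j < \<pi> i"
    by simp
  define X where "X = {c \<in> {1..n}. \<pi> c < \<pi> j}"
  have "card X = card {v \<in> {1..n}. v < \<pi> j}"
    using card_permutes_filter[OF S321_permutes[OF assms(1)], of "\<lambda>v. v < \<pi> j"] by (simp add: X_def)
  also have "{v \<in> {1..n}. v < \<pi> j} = {1..<\<pi> j}"
    using S321_in_range[OF assms(1), of j] assms by auto
  finally have "card X = \<pi> j - 1"
    by simp
  have "\<not> X \<subseteq> {1..<j} - {i}"
  proof
    assume "X \<subseteq> {1..<j} - {i}"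
    then have "card X \<le> card ({1..<j} - {i})"
      by (intro card_mono) auto
    also have "\<dots> = j - 2"
      using assms by simp
    finally show False
      using \<open>card X = \<pi> j - 1\<close> assms unfolding weak_exc_def by simp
  qed
  then obtain c where c: "c \<in> X" "c \<notin> {1..<j} - {i}"
    by blast
  then have "c \<noteq> j" "c \<noteq> i"
    using ji by (auto simp: X_def)
  then have "j < c" "c \<le> n" "\<pi> c < \<pi> j"
    using c by (auto simp: X_def)
  then show False
    using S321_avoids321[OF assms(1)] assms ji unfolding avoids321_def by blast
qed

lemma S321_deficiency_less:
  assumes "\<pi> \<in> S321 n" "1 \<le> i" "i < j" "j \<le> n" "deficiency \<pi> i" "deficiency \<pi> j"
  shows "\<pi> i < \<pi> j"
proof (rule ccontr)
  assume "\<not> \<pi> i < \<pi> j"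
  moreover have "\<pi> i \<noteq> \<pi> j"
    using permutes_inj[OF S321_permutes[OF assms(1)]] assms(3) by (metis inj_eq less_irrefl)
  ultimately have ji: "\<pi> j < \<pi> i"
    by simp
  define Y where "Y = {c \<in> {1..n}. \<pi> i < \<pi> c}"
  have "card Y = card {v \<in> {1..n}. \<pi> i < v}"
    using card_permutes_filter[OF S321_permutes[OF assms(1)], of "\<lambda>v. \<pi> i < v"] by (simp add: Y_def)
  also have "{v \<in> {1..n}. \<pi> i < v} = {\<pi> i<..n}"
    using S321_in_range[OF assms(1), of i] assms by auto
  finally have "card Y = n - \<pi> i"
    by simp
  have "\<not> Y \<subseteq> {i<..n} - {j}"
  proof
    assume "Y \<subseteq> {i<..n} - {j}"
    then have "card Y \<le> card ({i<..n} - {j})"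
      by (intro card_mono) auto
    also have "\<dots> = n - i - 1"
      using assms by simp
    finally show False
      using \<open>card Y = n - \<pi> i\<close> assms unfolding deficiency_def by simp
  qed
  then obtain c where c: "c \<in> Y" "c \<notin> {i<..n} - {j}"
    by blast
  then have "c \<noteq> j" "c \<noteq> i"
    using ji by (auto simp: Y_def)
  then have "c < i" "1 \<le> c" "\<pi> i < \<pi> c"
    using c by (auto simp: Y_def)
  then show False
    using S321_avoids321[OF assms(1)] assms ji unfolding avoids321_def by blast
qed

lemma S321_strict_mono_on_weak_exc:
  "\<pi> \<in> S321 n \<Longrightarrow> strict_mono_on {i \<in> {1..n}. weak_exc \<pi> i} \<pi>"
  using S321_weak_exc_less by (auto intro!: strict_mono_onI)

lemma avoids321_of_two_increasing:
  assumes "strict_mono_on ({1..n} \<inter> D) \<pi>" "strict_mono_on ({1..n} - D) \<pi>"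
  shows "avoids321 n \<pi>"
  unfolding avoids321_def
proof
  assume "\<exists>a b c. 1 \<le> a \<and> a < b \<and> b < c \<and> c \<le> n \<and> \<pi> b < \<pi> a \<and> \<pi> c < \<pi> b"
  then obtain a b c where abc: "1 \<le> a" "a < b" "b < c" "c \<le> n" "\<pi> b < \<pi> a" "\<pi> c < \<pi> b"
    by blast
  have increasing: "\<pi> x < \<pi> y"
    if "x \<in> {a, b, c}" "y \<in> {a, b, c}" "x < y" "x \<in> D \<longleftrightarrow> y \<in> D" for x y
    using that abc strict_mono_onD[OF assms(1), of x y] strict_mono_onD[OF assms(2), of x y]
    by (cases "x \<in> D") auto
  show False
    using increasing[of a b] increasing[of b c] increasing[of a c] abc by auto
qed

definition deficiency_pairs :: "nat \<Rightarrow> (nat \<Rightarrow> nat) \<Rightarrow> (nat \<times> nat) set" where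
  "deficiency_pairs n \<pi> = (\<lambda>i. (i, \<pi> i)) ` {i \<in> {1..n}. deficiency \<pi> i}"

lemma mem_deficiency_pairs:
  "(i, v) \<in> deficiency_pairs n \<pi> \<longleftrightarrow> i \<in> {1..n} \<and> deficiency \<pi> i \<and> v = \<pi> i"
  by (auto simp: deficiency_pairs_def)

lemma fst_deficiency_pairs: "fst ` deficiency_pairs n \<pi> = {i \<in> {1..n}. deficiency \<pi> i}"
  by (force simp: deficiency_pairs_def)

lemma deficiency_chain_deficiency_pairs:
  assumes "\<pi> \<in> S321 n"
  shows "deficiency_chain n (deficiency_pairs n \<pi>)"
proof (rule deficiency_chainI)
  show "1 \<le> b \<and> b < a \<and> a \<le> n" if "(a, b) \<in> deficiency_pairs n \<pi>" for a b
    using that S321_in_range[OF assms] by (auto simp: mem_deficiency_pairs deficiency_def)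
  show "a < c \<longleftrightarrow> b < d"
    if "(a, b) \<in> deficiency_pairs n \<pi>" "(c, d) \<in> deficiency_pairs n \<pi>" for a b c d
    using that S321_deficiency_less[OF assms, of a c] S321_deficiency_less[OF assms, of c a]
    by (cases a c rule: linorder_cases) (auto simp: mem_deficiency_pairs)
qed

lemma deficiency_pairs_inj_on: "inj_on (deficiency_pairs n) (S321 n)"
proof (rule inj_onI)
  fix \<pi> \<sigma> assume \<pi>: "\<pi> \<in> S321 n" and \<sigma>: "\<sigma> \<in> S321 n"
    and eq: "deficiency_pairs n \<pi> = deficiency_pairs n \<sigma>"
  define D where "D = {i \<in> {1..n}. deficiency \<pi> i}"
  define E where "E = {1..n} - D"
  have D_\<sigma>: "D = {i \<in> {1..n}. deficiency \<sigma> i}"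
    using fst_deficiency_pairs[of n \<pi>] fst_deficiency_pairs[of n \<sigma>] eq by (simp add: D_def)
  have E_weak_exc: "E = {i \<in> {1..n}. weak_exc \<tau> i}" if "D = {i \<in> {1..n}. deficiency \<tau> i}" for \<tau>
    using that by (auto simp: E_def weak_exc_def deficiency_def)
  have on_D: "\<pi> i = \<sigma> i" if "i \<in> D" for i
  proof -
    have "(i, \<pi> i) \<in> deficiency_pairs n \<pi>"
      using that by (simp add: D_def mem_deficiency_pairs)
    then have "(i, \<pi> i) \<in> deficiency_pairs n \<sigma>"
      by (simp only: eq)
    then show ?thesis
      by (simp add: mem_deficiency_pairs)
  qed
  have image_E: "\<tau> ` E = {1..n} - \<tau> ` D" if "\<tau> \<in> S321 n" for \<tau>
    using image_set_diff[OF permutes_inj[OF S321_permutes[OF that]]]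
      permutes_image[OF S321_permutes[OF that]] by (simp add: E_def)
  have "\<pi> ` D = \<sigma> ` D"
    using on_D by (rule image_cong[OF refl])
  then have "\<pi> ` E = \<sigma> ` E"
    using image_E[OF \<pi>] image_E[OF \<sigma>] by simp
  moreover have "strict_mono_on E \<pi>" "strict_mono_on E \<sigma>"
    using S321_strict_mono_on_weak_exc[OF \<pi>] S321_strict_mono_on_weak_exc[OF \<sigma>]
      E_weak_exc[OF D_def] E_weak_exc[OF D_\<sigma>] by simp_all
  ultimately have on_E: "\<pi> i = \<sigma> i" if "i \<in> E" for i
    using strict_mono_on_image_eq_unique[of E] that by (simp add: E_def)
  show "\<pi> = \<sigma>"
  proof
    fix i
    show "\<pi> i = \<sigma> i"
      using on_D on_E permutes_not_in[OF S321_permutes[OF \<pi>]] permutes_not_in[OF S321_permutes[OF \<sigma>]]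
      by (cases "i \<in> {1..n}") (auto simp: E_def)
  qed
qed

lemma permutes_piecewise:
  assumes "bij_betw g D W" "bij_betw h (A - D) (A - W)" "D \<subseteq> A" "W \<subseteq> A"
  shows "(\<lambda>i. if i \<in> D then g i else if i \<in> A then h i else i) permutes A"
proof (rule bij_imp_permutes)
  let ?\<pi> = "\<lambda>i. if i \<in> D then g i else if i \<in> A then h i else i"
  have "bij_betw ?\<pi> (D \<union> (A - D)) (W \<union> (A - W))"
  proof (rule bij_betw_combine)
    show "bij_betw ?\<pi> D W"
      using assms(1) by (rule bij_betw_cong[THEN iffD1, rotated]) simp
    show "bij_betw ?\<pi> (A - D) (A - W)"
      using assms(2) by (rule bij_betw_cong[THEN iffD1, rotated]) simp
  qed auto
  then show "bij_betw ?\<pi> A A"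
    using assms(3,4) by (simp add: Un_absorb1)
qed (use assms(3) in auto)

lemma deficiency_pairs_surj:
  assumes S: "deficiency_chain n S"
  shows "\<exists>\<pi> \<in> S321 n. deficiency_pairs n \<pi> = S"
proof -
  define D g where "D = fst ` S" and "g = chain_value S"
  define E V where "E = {1..n} - D" and "V = {1..n} - g ` D"
  have D: "D \<subseteq> {1..n}" "g ` D \<subseteq> {1..n}"
    using deficiency_chain_subset[OF S] chain_value_image[OF S] by (auto simp: D_def g_def)
  have g: "strict_mono_on D g" "\<And>d. d \<in> D \<Longrightarrow> g d < d"
    using strict_mono_on_chain_value[OF S] chain_value_less[OF S] by (auto simp: D_def g_def)
  obtain h where h: "strict_mono_on E h" "h ` E = V" and h_ge: "\<And>e. e \<in> E \<Longrightarrow> e \<le> h e"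
    using exists_increasing_map_on_complement[OF g D] unfolding E_def V_def by blast
  define \<pi> where "\<pi> i = (if i \<in> D then g i else if i \<in> {1..n} then h i else i)" for i
  have "\<pi> permutes {1..n}"
    unfolding \<pi>_def
  proof (rule permutes_piecewise[where W = "g ` D"])
    show "bij_betw g D (g ` D)"
      using strict_mono_on_imp_inj_on[OF g(1)] by (rule bij_betw_imageI) simp
    show "bij_betw h ({1..n} - D) ({1..n} - g ` D)"
      using strict_mono_on_imp_inj_on[OF h(1)] h(2) unfolding E_def V_def by (rule bij_betw_imageI)
  qed (use D in auto)
  moreover have "avoids321 n \<pi>"
  proof (rule avoids321_of_two_increasing)
    show "strict_mono_on ({1..n} \<inter> D) \<pi>"
      using g(1) by (auto simp: \<pi>_def strict_mono_on_def)
    show "strict_mono_on ({1..n} - D) \<pi>"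
      using h(1) by (auto simp: \<pi>_def E_def strict_mono_on_def)
  qed
  moreover have "deficiency_pairs n \<pi> = S"
  proof -
    have "deficiency \<pi> i \<longleftrightarrow> i \<in> D" if "i \<in> {1..n}" for i
      using that g(2) h_ge[of i] by (cases "i \<in> D") (auto simp: \<pi>_def E_def deficiency_def)
    then have "{i \<in> {1..n}. deficiency \<pi> i} = D"
      using D by blast
    then have "deficiency_pairs n \<pi> = (\<lambda>i. (i, g i)) ` D"
      by (simp add: deficiency_pairs_def \<pi>_def)
    then show ?thesis
      using deficiency_chain_graph[OF S] by (simp add: D_def g_def)
  qed
  ultimately show ?thesis
    by (auto simp: S321_def)
qed

lemma deficiency_pairs_bij: "bij_betw (deficiency_pairs n) (S321 n) {S. deficiency_chain n S}"
  unfolding bij_betw_def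
  using deficiency_pairs_inj_on deficiency_chain_deficiency_pairs deficiency_pairs_surj by fastforce

section \<open>Leaf statistics\<close>

lemma leaf_statistics:
  assumes "deficiency_pairs n \<pi> = tree_chain T" "edges T = n" "1 \<le> n"
  shows "young_leaves T =
      card {i \<in> {1..n-1}. deficiency \<pi> i \<and> deficiency \<pi> (i+1)} + (if \<pi> n < n then 1 else 0)"
    and "old_leaves T =
      card {i \<in> {1..n}. weak_exc \<pi> i \<and> (i = n \<or> \<not> weak_exc \<pi> (i+1))}"
proof -
  have word: "deficiency \<pi> i \<longleftrightarrow> tree_word T ! (i - 1)" if "i \<in> {1..n}" for i
  proof -
    have "deficiency \<pi> i \<longleftrightarrow> i \<in> fst ` deficiency_pairs n \<pi>"
      using that by (simp add: fst_deficiency_pairs)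
    also have "\<dots> \<longleftrightarrow> i - 1 \<in> true_positions (tree_word T)"
      using that by (force simp: assms(1) fst_tree_chain)
    finally show ?thesis
      using that assms(2) by (auto simp: true_positions_def length_tree_word)
  qed
  have length: "length (tree_word T) = n"
    using assms(2) by (simp add: length_tree_word)
  show "young_leaves T =
      card {i \<in> {1..n-1}. deficiency \<pi> i \<and> deficiency \<pi> (i+1)} + (if \<pi> n < n then 1 else 0)"
    using leaves_eq_count_before_true[of T] count_before_true_eq_card_shifted[OF length word, of True]
      card_split_last[OF assms(3)] by (simp add: deficiency_def)
  have "weak_exc \<pi> i \<longleftrightarrow> \<not> deficiency \<pi> i" for i
    by (simp add: weak_exc_def deficiency_def not_less)
  then show "old_leaves T =
      card {i \<in> {1..n}. weak_exc \<pi> i \<and> (i = n \<or> \<not> weak_exc \<pi> (i+1))}"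
    using leaves_eq_count_before_true[of T] count_before_true_eq_card_shifted[OF length word, of False]
    by simp
qed

theorem mainTheorem12:
  fixes n :: nat
  assumes "n \<ge> 1"
  shows "\<exists>\<phi>. bij_betw \<phi> (plane_trees n) (S321 n) \<and>
    (\<forall>T \<in> plane_trees n.
       young_leaves T =
         card {i \<in> {1..n-1}. deficiency (\<phi> T) i \<and> deficiency (\<phi> T) (i+1)}
         + (if (\<phi> T) n < n then 1 else 0)
     \<and> old_leaves T =
         card {i \<in> {1..n}. weak_exc (\<phi> T) i \<and> (i = n \<or> \<not> weak_exc (\<phi> T) (i+1))})"
proof -
  define \<phi> where "\<phi> = the_inv_into (S321 n) (deficiency_pairs n) \<circ> tree_chain"
  have "bij_betw \<phi> (plane_trees n) (S321 n)"
    unfolding \<phi>_def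
    by (rule bij_betw_trans[OF tree_chain_bij bij_betw_the_inv_into[OF deficiency_pairs_bij]])
  moreover have "deficiency_pairs n (\<phi> T) = tree_chain T \<and> edges T = n" if "T \<in> plane_trees n" for T
    using f_the_inv_into_f_bij_betw[OF deficiency_pairs_bij bij_betw_apply[OF tree_chain_bij that]] that
    by (simp add: \<phi>_def plane_trees_def)
  ultimately show ?thesis
    using leaf_statistics[OF _ _ assms] by blast
qed

end
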